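(* Let $h$ be a $K$-strongly convex penalty function on $\Delta$, let $p\in\Delta$, and let $\Delta_p=\{x\in\Delta:\operatorname{supp}(x)\supseteq\operatorname{supp}(p)\}$. Then: (i) $D_h(p,x)<+\infty$ whenever $x\in\Delta_p$; (ii) $D_h(p,x)\ge0$ for all $x\in\Delta$, with $D_h(p,x)=0$ if and only if $p=x$; in particular $D_h(p,x)\ge\tfrac12K\|x-p\|^2$ for all $x\in\Delta$; (iii) $D_h(p,x_j)\to D_h(p,x)$ whenever $x_j\to x$ in $\Delta_p$.
   Context: $\Delta$ is the unit simplex of $\mathbb{R}^n$. A $K$-strongly convex penalty function on $\Delta$ is $h:\Delta\to\mathbb{R}$ that is continuous, $C^\infty$ on the relative interior of every face of $\Delta$, and satisfies $h(tx_1+(1-t)x_2)\le th(x_1)+(1-t)h(x_2)-\tfrac12Kt(1-t)\|x_1-x_2\|^2$ for all $x_1,x_2\in\Delta$, $t\in[0,1]$. The Bregman divergence is $D_h(p,x)=h(p)-h(x)-h'(x;p-x)$ for $p,x\in\Delta$, where $h'(x;p-x)=\lim_{t\to0^+}t^{-1}[h(x+t(p-x))-h(x)]$ is the one-sided directional derivative (possibly $-\infty$, in which case $D_h(p,x)=+\infty$). *)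

theory Defs
  imports "HOL-Analysis.Analysis"
begin

definition unit_simplex :: "(real^'n) set" where
  "unit_simplex = {x. (\<forall>i. 0 \<le> x $ i) \<and> (\<Sum>i\<in>UNIV. x $ i) = 1}"

definition supp :: "real^'n \<Rightarrow> 'n set" where
  "supp x = {i. x $ i \<noteq> 0}"

definition face_relint :: "'n set \<Rightarrow> (real^'n) set" where
  "face_relint S = {x \<in> unit_simplex. supp x = S}"

definition Delta_p :: "real^'n \<Rightarrow> (real^'n) set" where
  "Delta_p p = {x \<in> unit_simplex. supp p \<subseteq> supp x}"

fun pderivs :: "'n list \<Rightarrow> (real^'n::finite \<Rightarrow> real) \<Rightarrow> (real^'n \<Rightarrow> real)" where
  "pderivs [] f = f"
| "pderivs (i # is) f = (\<lambda>x. deriv (\<lambda>t. pderivs is f (x + t *\<^sub>R axis i 1)) 0)"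

definition Cinf_on :: "(real^'n::finite) set \<Rightarrow> (real^'n \<Rightarrow> real) \<Rightarrow> bool" where
  "Cinf_on U f \<longleftrightarrow> open U \<and>
     (\<forall>is. continuous_on U (pderivs is f) \<and>
       (\<forall>i. \<forall>x\<in>U. (\<lambda>t. pderivs is f (x + t *\<^sub>R axis i 1)) differentiable (at 0)))"

text \<open>h is C-infinity on the relative interior of every face: on each relatively open face
  it agrees with a C-infinity function defined on an open neighbourhood in R^n.\<close>
definition smooth_on_faces :: "(real^'n::finite \<Rightarrow> real) \<Rightarrow> bool" where
  "smooth_on_faces h \<longleftrightarrow> (\<forall>S. S \<noteq> {} \<longrightarrow>
     (\<exists>U f. face_relint S \<subseteq> U \<and> Cinf_on U f \<and> (\<forall>x\<in>face_relint S. f x = h x)))"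

definition strongly_convex_penalty :: "real \<Rightarrow> (real^'n::finite \<Rightarrow> real) \<Rightarrow> bool" where
  "strongly_convex_penalty K h \<longleftrightarrow> 0 < K \<and> continuous_on unit_simplex h \<and> smooth_on_faces h \<and>
     (\<forall>x1\<in>unit_simplex. \<forall>x2\<in>unit_simplex. \<forall>t\<in>{0..1::real}.
        h (t *\<^sub>R x1 + (1 - t) *\<^sub>R x2) \<le> t * h x1 + (1 - t) * h x2
          - 1/2 * K * t * (1 - t) * (norm (x1 - x2))\<^sup>2)"

definition dir_deriv :: "(real^'n \<Rightarrow> real) \<Rightarrow> real^'n \<Rightarrow> real^'n \<Rightarrow> ereal" where
  "dir_deriv h x v = Lim (at_right 0) (\<lambda>t::real. ereal ((h (x + t *\<^sub>R v) - h x) / t))"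

text \<open>Bregman divergence; equals +infinity when the directional derivative is -infinity.\<close>
definition bregman :: "(real^'n \<Rightarrow> real) \<Rightarrow> real^'n \<Rightarrow> real^'n \<Rightarrow> ereal" where
  "bregman h p x = ereal (h p - h x) - dir_deriv h x (p - x)"

end

theory Submission
  imports Defs
begin

text \<open>Along the segment from x towards p, strong convexity makes the difference quotients
  t \<mapsto> (h (x + t (p - x)) - h x) / t monotone, so the directional derivative is their infimum over
  (0, 1] and is bounded by h p - h x - K/2 |x - p|^2; this gives (ii). When supp x \<supseteq> supp p the
  segment can be extended slightly beyond x, and a quotient at a negative parameter bounds the
  derivative from below, giving (i). For (iii), the segment near x stays inside the relative
  interior of the face of x, where h is smooth, so the quotients converge from both sides to
  the derivative; squeezing the derivative at X j between quotients at \<plusminus>\<delta>, which depend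
  continuously on X j, yields continuity.\<close>

section \<open>Directional limits of smooth functions\<close>

lemma Cinf_on_has_real_derivative_axis:
  fixes f :: "real^'n::finite \<Rightarrow> real"
  assumes "Cinf_on U f" and "w + s *\<^sub>R axis j 1 \<in> U"
  shows "((\<lambda>s. f (w + s *\<^sub>R axis j 1)) has_real_derivative pderivs [j] f (w + s *\<^sub>R axis j 1)) (at s)"
proof -
  let ?z = "w + s *\<^sub>R axis j 1"
  have "(\<lambda>t. f (?z + t *\<^sub>R axis j 1)) differentiable (at 0)"
    using assms unfolding Cinf_on_def by (metis pderivs.simps(1))
  then have "((\<lambda>t. f (?z + t *\<^sub>R axis j 1)) has_real_derivative pderivs [j] f ?z) (at (s + - s))"
    by (simp add: DERIV_deriv_iff_real_differentiable)
  then have "((\<lambda>t. f (?z + (t + - s) *\<^sub>R axis j 1)) has_real_derivative pderivs [j] f ?z) (at s)"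
    by (simp only: DERIV_shift)
  then show ?thesis by (simp add: algebra_simps)
qed

lemma mvt_between_zero:
  fixes \<phi> \<phi>' :: "real \<Rightarrow> real"
  assumes "\<And>s. \<bar>s\<bar> \<le> \<bar>c\<bar> \<Longrightarrow> (\<phi> has_real_derivative \<phi>' s) (at s)"
  shows "\<exists>z. \<bar>z\<bar> \<le> \<bar>c\<bar> \<and> \<phi> c - \<phi> 0 = c * \<phi>' z"
proof -
  have der: "(\<phi> has_derivative (*) (\<phi>' s)) (at s within T)" if "\<bar>s\<bar> \<le> \<bar>c\<bar>" for s T
    using assms[OF that] by (simp add: has_field_derivative_def has_derivative_at_withinI)
  show ?thesis
  proof (cases "0 \<le> c")
    case True
    then obtain z where "z \<in> {0..c}" "\<phi> c - \<phi> 0 = \<phi>' z * (c - 0)"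
      using mvt_very_simple[of 0 c \<phi> "\<lambda>s. (*) (\<phi>' s)"] der[of _ "{0..c}"] by auto
    then show ?thesis by (intro exI[of _ z]) auto
  next
    case False
    then obtain z where "z \<in> {c..0}" "\<phi> 0 - \<phi> c = \<phi>' z * (0 - c)"
      using mvt_very_simple[of c 0 \<phi> "\<lambda>s. (*) (\<phi>' s)"] der[of _ "{c..0}"] by auto
    then show ?thesis by (intro exI[of _ z]) (auto simp: algebra_simps)
  qed
qed

lemma Cinf_on_mean_value_axis:
  fixes f :: "real^'n::finite \<Rightarrow> real"
  assumes "Cinf_on U f" and "\<And>s. \<bar>s\<bar> \<le> \<bar>c\<bar> \<Longrightarrow> w + s *\<^sub>R axis j 1 \<in> U"
  shows "\<exists>z. \<bar>z\<bar> \<le> \<bar>c\<bar> \<and> f (w + c *\<^sub>R axis j 1) - f w = c * pderivs [j] f (w + z *\<^sub>R axis j 1)"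
  using mvt_between_zero[of c "\<lambda>s. f (w + s *\<^sub>R axis j 1)"]
    Cinf_on_has_real_derivative_axis[OF assms(1)] assms(2) by simp

lemma Cinf_on_tendsto_axis_quotient:
  fixes f :: "real^'n::finite \<Rightarrow> real"
  assumes C: "Cinf_on U f" and "x \<in> U"
  shows "((\<lambda>t. (f (x + t *\<^sub>R v + (t * c) *\<^sub>R axis j 1) - f (x + t *\<^sub>R v)) / t)
          \<longlongrightarrow> c * pderivs [j] f x) (at 0)"
proof -
  let ?g = "pderivs [j] f" and ?e = "axis j (1::real)"
  let ?y = "\<lambda>t s. x + t *\<^sub>R v + s *\<^sub>R ?e"
  have "open U" and "continuous_on U ?g" using C unfolding Cinf_on_def by blast+
  then have g: "isCont ?g x" using \<open>x \<in> U\<close> continuous_on_eq_continuous_at by blast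
  obtain r where "r > 0" and r: "ball x r \<subseteq> U" using \<open>open U\<close> \<open>x \<in> U\<close> open_contains_ball by blast
  define M where "M = norm v + \<bar>c\<bar> + 1"
  have "M > 0" by (simp add: M_def add_nonneg_pos)
  have y_close: "norm (?y t s - x) \<le> \<bar>t\<bar> * M" if "\<bar>s\<bar> \<le> \<bar>t * c\<bar>" for t s
  proof -
    have "norm (?y t s - x) \<le> \<bar>t\<bar> * norm v + \<bar>s\<bar>"
      using norm_triangle_ineq[of "t *\<^sub>R v" "s *\<^sub>R ?e"] by simp
    also have "\<dots> \<le> \<bar>t\<bar> * M" using that by (simp add: M_def abs_mult algebra_simps)
    finally show ?thesis .
  qed
  define z where "z t = (SOME z. \<bar>z\<bar> \<le> \<bar>t * c\<bar> \<and>
    f (?y t (t * c)) - f (x + t *\<^sub>R v) = t * c * ?g (?y t z))" for t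
  have z: "\<bar>z t\<bar> \<le> \<bar>t * c\<bar> \<and> f (?y t (t * c)) - f (x + t *\<^sub>R v) = t * c * ?g (?y t (z t))"
    if "\<bar>t\<bar> < r / M" for t
    unfolding z_def
  proof (rule someI_ex, rule Cinf_on_mean_value_axis[OF C])
    fix s assume "\<bar>s\<bar> \<le> \<bar>t * c\<bar>"
    then have "norm (?y t s - x) < r"
      using y_close[of s t] that \<open>M > 0\<close> by (simp add: pos_less_divide_eq order_le_less_trans)
    then have "?y t s \<in> ball x r" by (metis dist_commute dist_norm mem_ball)
    then show "x + t *\<^sub>R v + s *\<^sub>R ?e \<in> U" using r by blast
  qed
  have near: "\<forall>\<^sub>F t in at 0. \<bar>t\<bar> < r / M"
    using \<open>r > 0\<close> \<open>M > 0\<close> by (auto simp: eventually_at intro!: exI[of _ "r / M"])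
  have "((\<lambda>t. ?y t (z t) - x) \<longlongrightarrow> 0) (at 0)"
  proof (rule Lim_null_comparison)
    show "\<forall>\<^sub>F t in at 0. norm (?y t (z t) - x) \<le> \<bar>t\<bar> * M"
      using near by eventually_elim (use z y_close in blast)
    show "((\<lambda>t. \<bar>t\<bar> * M) \<longlongrightarrow> 0) (at 0)" by (auto intro!: tendsto_eq_intros)
  qed
  then have "((\<lambda>t. ?y t (z t)) \<longlongrightarrow> x) (at 0)" by (rule LIM_zero_cancel)
  then have "((\<lambda>t. c * ?g (?y t (z t))) \<longlongrightarrow> c * ?g x) (at 0)"
    by (intro tendsto_mult_left isCont_tendsto_compose[OF g])
  moreover have "\<forall>\<^sub>F t in at 0. c * ?g (?y t (z t)) = (f (?y t (t * c)) - f (x + t *\<^sub>R v)) / t"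
    using eventually_conj[OF near eventually_neq_at_within[of 0 0]]
    by eventually_elim (use z in simp)
  ultimately show ?thesis by (blast intro: Lim_transform_eventually)
qed

lemma Cinf_on_directional_limit:
  fixes f :: "real^'n::finite \<Rightarrow> real"
  assumes C: "Cinf_on U f" and "x \<in> U"
  shows "\<exists>L. ((\<lambda>t. (f (x + t *\<^sub>R v) - f x) / t) \<longlongrightarrow> L) (at 0)"
proof -
  \<comment> \<open>Cinf_on only provides partial derivatives, so v is assembled one coordinate at a time.\<close>
  define v_on where "v_on I = (\<chi> i. if i \<in> I then v $ i else 0)" for I
  have "\<exists>L. ((\<lambda>t. (f (x + t *\<^sub>R v_on I) - f x) / t) \<longlongrightarrow> L) (at 0)" if "finite I" for I
    using that
  proof (induction I rule: finite_induct)
    case empty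
    have "v_on {} = 0" by (simp add: v_on_def vec_eq_iff)
    then show ?case by auto
  next
    case (insert j I)
    then obtain L where L: "((\<lambda>t. (f (x + t *\<^sub>R v_on I) - f x) / t) \<longlongrightarrow> L) (at 0)" by blast
    have "v_on (insert j I) = v_on I + (v $ j) *\<^sub>R axis j 1"
      using insert(2) by (auto simp: v_on_def vec_eq_iff axis_def)
    then have split: "(f (x + t *\<^sub>R v_on (insert j I)) - f x) / t =
        (f (x + t *\<^sub>R v_on I + (t * v $ j) *\<^sub>R axis j 1) - f (x + t *\<^sub>R v_on I)) / t
        + (f (x + t *\<^sub>R v_on I) - f x) / t" for t
      by (simp add: scaleR_add_right add.assoc diff_divide_distrib)
    show ?case
      unfolding split by (rule exI, rule tendsto_add[OF Cinf_on_tendsto_axis_quotient[OF C \<open>x \<in> U\<close>] L])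
  qed
  moreover have "v_on UNIV = v" by (simp add: v_on_def vec_eq_iff)
  ultimately show ?thesis by fastforce
qed

section \<open>Difference quotients of convex functions\<close>

definition dir_quot :: "('a::real_vector \<Rightarrow> real) \<Rightarrow> 'a \<Rightarrow> 'a \<Rightarrow> real \<Rightarrow> real" where
  "dir_quot f x v t = (f (x + t *\<^sub>R v) - f x) / t"

lemma convex_on_line:
  assumes f: "convex_on S f"
  shows "convex_on {t. x + t *\<^sub>R v \<in> S} (\<lambda>t. f (x + t *\<^sub>R v))"
proof -
  have line: "x + ((1 - u) * a + u * b) *\<^sub>R v = (1 - u) *\<^sub>R (x + a *\<^sub>R v) + u *\<^sub>R (x + b *\<^sub>R v)"
    for u a b :: real
    by (simp add: algebra_simps)
  have "convex S" using f by (rule convex_on_imp_convex)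
  show ?thesis
  proof (rule convex_onI)
    show "convex {t. x + t *\<^sub>R v \<in> S}"
    proof (unfold convex_alt, intro ballI allI impI)
      fix a b u :: real
      assume "a \<in> {t. x + t *\<^sub>R v \<in> S}" "b \<in> {t. x + t *\<^sub>R v \<in> S}" "0 \<le> u \<and> u \<le> 1"
      then have "(1 - u) *\<^sub>R (x + a *\<^sub>R v) + u *\<^sub>R (x + b *\<^sub>R v) \<in> S"
        using convexD_alt[OF \<open>convex S\<close>] by simp
      then show "(1 - u) *\<^sub>R a + u *\<^sub>R b \<in> {t. x + t *\<^sub>R v \<in> S}" by (simp add: line)
    qed
    fix u a b :: real
    assume "0 < u" "u < 1" and "a \<in> {t. x + t *\<^sub>R v \<in> S}" "b \<in> {t. x + t *\<^sub>R v \<in> S}"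
    then show "f (x + ((1 - u) *\<^sub>R a + u *\<^sub>R b) *\<^sub>R v) \<le> (1 - u) * f (x + a *\<^sub>R v) + u * f (x + b *\<^sub>R v)"
      using convex_onD[OF f, of u "x + a *\<^sub>R v" "x + b *\<^sub>R v"] line[of u a b] by simp
  qed
qed

lemma dir_quot_eq_slope: "dir_quot f x v s = (f x - f (x + s *\<^sub>R v)) / (0 - s)"
  by (simp add: dir_quot_def divide_simps)

lemma dir_quot_mono:
  assumes f: "convex_on S f" and "x \<in> S" and "0 < s" "s \<le> t" and "x + t *\<^sub>R v \<in> S"
  shows "dir_quot f x v s \<le> dir_quot f x v t"
proof (cases "s = t")
  case False
  have "0 \<in> {\<tau>. x + \<tau> *\<^sub>R v \<in> S}" "t \<in> {\<tau>. x + \<tau> *\<^sub>R v \<in> S}" using assms by simp_all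
  from convex_on_slope_le(1)[OF convex_on_line[OF f] this \<open>0 < s\<close>] False \<open>s \<le> t\<close>
  show ?thesis unfolding dir_quot_eq_slope by simp
qed simp

lemma dir_quot_mono_across_zero:
  assumes f: "convex_on S f" and "x \<in> S" and "s < 0" "0 < t"
    and "x + s *\<^sub>R v \<in> S" "x + t *\<^sub>R v \<in> S"
  shows "dir_quot f x v s \<le> dir_quot f x v t"
proof -
  have "s \<in> {\<tau>. x + \<tau> *\<^sub>R v \<in> S}" "t \<in> {\<tau>. x + \<tau> *\<^sub>R v \<in> S}" using assms by simp_all
  note slope = convex_on_slope_le[OF convex_on_line[OF f] this \<open>s < 0\<close> \<open>0 < t\<close>]
  have "dir_quot f x v s \<le> (f x - f (x + t *\<^sub>R v)) / (0 - t)"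
    using order_trans[OF slope] by (simp add: dir_quot_def)
  then show ?thesis unfolding dir_quot_eq_slope[of f x v t] .
qed

lemma convex_add_scaleR_mem:
  assumes "convex S" "x \<in> S" "x + v \<in> S" "0 \<le> t" "t \<le> 1"
  shows "x + t *\<^sub>R v \<in> S"
  using convexD_alt[OF assms(1,2,3), of t] assms(4,5) by (simp add: algebra_simps)

lemma tendsto_dir_quot_INF:
  assumes f: "convex_on S f" and x: "x \<in> S" and "x + v \<in> S"
  shows "((\<lambda>t. ereal (dir_quot f x v t)) \<longlongrightarrow> (INF t\<in>{0<..1}. ereal (dir_quot f x v t))) (at_right 0)"
proof (rule order_tendstoI)
  let ?L = "INF t\<in>{0<..1}. ereal (dir_quot f x v t)"
  fix a assume a: "a < ?L"
  have "a < ereal (dir_quot f x v t)" if "0 < t" "t < 1" for t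
    using that by (intro less_INF_D[OF a]) auto
  then show "\<forall>\<^sub>F t in at_right 0. a < ereal (dir_quot f x v t)"
    unfolding eventually_at_right_field by (intro exI[of _ 1]) auto
next
  let ?L = "INF t\<in>{0<..1}. ereal (dir_quot f x v t)"
  fix a assume "?L < a"
  then obtain t where t: "0 < t" "t \<le> 1" "ereal (dir_quot f x v t) < a" by (auto simp: INF_less_iff)
  have "x + t *\<^sub>R v \<in> S"
    using convex_add_scaleR_mem[OF convex_on_imp_convex[OF f] x \<open>x + v \<in> S\<close>] t by simp
  then have "ereal (dir_quot f x v s) < a" if "0 < s" "s < t" for s
    using dir_quot_mono[OF f x, of s t v] that t(3)
    by (meson ereal_less_eq(3) less_imp_le order_le_less_trans)
  then show "\<forall>\<^sub>F s in at_right 0. ereal (dir_quot f x v s) < a"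
    unfolding eventually_at_right_field using t by (intro exI[of _ t]) auto
qed

lemma dir_deriv_eq_INF:
  fixes f :: "real^'n \<Rightarrow> real"
  assumes "convex_on S f" "x \<in> S" "x + v \<in> S"
  shows "dir_deriv f x v = (INF t\<in>{0<..1}. ereal (dir_quot f x v t))"
  unfolding dir_deriv_def dir_quot_def[symmetric]
  by (rule tendsto_Lim[OF trivial_limit_at_right_real tendsto_dir_quot_INF[OF assms]])

lemma tendsto_dir_quot_dir_deriv:
  fixes f :: "real^'n \<Rightarrow> real"
  assumes "convex_on S f" "x \<in> S" "x + v \<in> S"
  shows "((\<lambda>t. ereal (dir_quot f x v t)) \<longlongrightarrow> dir_deriv f x v) (at_right 0)"
  unfolding dir_deriv_eq_INF[OF assms] by (rule tendsto_dir_quot_INF[OF assms])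

lemma dir_deriv_le_dir_quot:
  fixes f :: "real^'n \<Rightarrow> real"
  assumes "convex_on S f" "x \<in> S" "x + v \<in> S" and "0 < t" "t \<le> 1"
  shows "dir_deriv f x v \<le> ereal (dir_quot f x v t)"
  unfolding dir_deriv_eq_INF[OF assms(1-3)] using assms(4,5) by (intro INF_lower) auto

lemma dir_quot_le_dir_deriv:
  fixes f :: "real^'n \<Rightarrow> real"
  assumes f: "convex_on S f" and x: "x \<in> S" and "x + v \<in> S" and "s < 0" "x + s *\<^sub>R v \<in> S"
  shows "ereal (dir_quot f x v s) \<le> dir_deriv f x v"
  unfolding dir_deriv_eq_INF[OF f x \<open>x + v \<in> S\<close>]
proof (rule INF_greatest)
  fix t assume "t \<in> {0<..1::real}"
  then show "ereal (dir_quot f x v s) \<le> ereal (dir_quot f x v t)"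
    using assms convex_add_scaleR_mem[OF convex_on_imp_convex[OF f] x \<open>x + v \<in> S\<close>, of t]
    by (auto intro!: dir_quot_mono_across_zero[OF f x])
qed

lemma dir_deriv_finite:
  fixes f :: "real^'n \<Rightarrow> real"
  assumes "convex_on S f" "x \<in> S" "x + v \<in> S" and "s < 0" "x + s *\<^sub>R v \<in> S"
  shows "\<exists>l. dir_deriv f x v = ereal l"
proof -
  have "ereal (dir_quot f x v s) \<le> dir_deriv f x v" by (rule dir_quot_le_dir_deriv[OF assms])
  moreover have "dir_deriv f x v \<le> ereal (dir_quot f x v 1)" by (rule dir_deriv_le_dir_quot[OF assms(1-3)]) auto
  ultimately show ?thesis by (cases "dir_deriv f x v") auto
qed

section \<open>The unit simplex\<close>

lemma unit_simplex_nth_bounds: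
  assumes "x \<in> unit_simplex" shows "0 \<le> x $ i" "x $ i \<le> 1"
proof -
  show "0 \<le> x $ i" using assms by (simp add: unit_simplex_def)
  have "x $ i \<le> (\<Sum>j\<in>UNIV. x $ j)"
    using assms by (intro member_le_sum) (auto simp: unit_simplex_def)
  then show "x $ i \<le> 1" using assms by (simp add: unit_simplex_def)
qed

lemma convex_unit_simplex: "convex (unit_simplex :: (real^'n) set)"
proof (rule convexI)
  fix x y :: "real^'n" and u v :: real
  assume "x \<in> unit_simplex" "y \<in> unit_simplex" "0 \<le> u" "0 \<le> v" "u + v = 1"
  then show "u *\<^sub>R x + v *\<^sub>R y \<in> unit_simplex"
    by (simp add: unit_simplex_def sum.distrib flip: sum_distrib_left)
qed

lemma unit_simplex_add_scaleR_diff: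
  assumes "x \<in> unit_simplex" "p \<in> unit_simplex" and "\<And>i. 0 \<le> x $ i + t * (p $ i - x $ i)"
  shows "x + t *\<^sub>R (p - x) \<in> unit_simplex"
proof -
  have "(\<Sum>i\<in>UNIV. (x + t *\<^sub>R (p - x)) $ i) = (\<Sum>i\<in>UNIV. x $ i) + t * ((\<Sum>i\<in>UNIV. p $ i) - (\<Sum>i\<in>UNIV. x $ i))"
    by (simp add: sum.distrib sum_distrib_left sum_subtractf algebra_simps)
  then show ?thesis using assms by (simp add: unit_simplex_def algebra_simps)
qed

lemma supp_nonempty:
  assumes "x \<in> unit_simplex" shows "supp x \<noteq> {}"
proof
  assume "supp x = {}"
  then have "x = 0" by (auto simp: supp_def vec_eq_iff)
  then show False using assms by (simp add: unit_simplex_def)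
qed

lemma finite_positive_lower_bound:
  fixes f :: "'a \<Rightarrow> real"
  assumes "finite A" "\<And>i. i \<in> A \<Longrightarrow> 0 < f i"
  shows "\<exists>m>0. \<forall>i\<in>A. m \<le> f i"
proof (cases "A = {}")
  case False
  then show ?thesis using assms by (intro exI[of _ "Min (f ` A)"]) auto
qed (auto intro: exI[of _ 1])

lemma unit_simplex_supp_lower_bound:
  assumes "x \<in> unit_simplex" shows "\<exists>m>0. \<forall>i\<in>supp x. m \<le> x $ i"
  using unit_simplex_nth_bounds(1)[OF assms]
  by (intro finite_positive_lower_bound) (auto simp: supp_def order_less_le)

lemma unit_simplex_extend_backward:
  assumes p: "p \<in> unit_simplex" and y: "y \<in> unit_simplex" and "0 \<le> \<delta>" "\<delta> \<le> s"
    and s: "\<forall>i\<in>supp p. s \<le> y $ i"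
  shows "y + (- \<delta>) *\<^sub>R (p - y) \<in> unit_simplex"
proof (rule unit_simplex_add_scaleR_diff[OF y p])
  fix i
  have "0 \<le> y $ i" "0 \<le> p $ i" "p $ i \<le> 1"
    using unit_simplex_nth_bounds[OF y] unit_simplex_nth_bounds[OF p] by auto
  moreover have "\<delta> \<le> y $ i" if "p $ i \<noteq> 0" using s that \<open>\<delta> \<le> s\<close> by (force simp: supp_def)
  ultimately have "\<delta> * p $ i \<le> y $ i"
    using \<open>0 \<le> \<delta>\<close> by (cases "p $ i = 0") (auto intro: order_trans[OF mult_left_le])
  then show "0 \<le> y $ i + - \<delta> * (p $ i - y $ i)"
    using \<open>0 \<le> \<delta>\<close> \<open>0 \<le> y $ i\<close> by (simp add: algebra_simps add_increasing2)
qed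

section \<open>Strongly convex penalties\<close>

lemma strongly_convex_penaltyD:
  fixes h :: "real^'n::finite \<Rightarrow> real"
  assumes "strongly_convex_penalty K h" "x1 \<in> unit_simplex" "x2 \<in> unit_simplex" "0 \<le> t" "t \<le> 1"
  shows "h (t *\<^sub>R x1 + (1 - t) *\<^sub>R x2)
    \<le> t * h x1 + (1 - t) * h x2 - 1/2 * K * t * (1 - t) * (norm (x1 - x2))\<^sup>2"
  using assms unfolding strongly_convex_penalty_def by auto

lemma strongly_convex_penalty_imp_convex_on:
  fixes h :: "real^'n::finite \<Rightarrow> real"
  assumes h: "strongly_convex_penalty K h"
  shows "convex_on unit_simplex h"
  unfolding convex_on_alt
proof (intro conjI convex_unit_simplex ballI allI impI)
  fix x1 x2 :: "real^'n" and t :: real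
  assume "x1 \<in> unit_simplex" "x2 \<in> unit_simplex" "0 \<le> t \<and> t \<le> 1"
  moreover have "0 \<le> 1/2 * K * t * (1 - t) * (norm (x1 - x2))\<^sup>2"
    using h \<open>0 \<le> t \<and> t \<le> 1\<close> by (simp add: strongly_convex_penalty_def)
  ultimately show "h (t *\<^sub>R x1 + (1 - t) *\<^sub>R x2) \<le> t * h x1 + (1 - t) * h x2"
    using strongly_convex_penaltyD[OF h] by fastforce
qed

lemma dir_quot_strong_bound:
  assumes h: "strongly_convex_penalty K h" and x: "x \<in> unit_simplex" and p: "p \<in> unit_simplex"
    and "0 < t" "t \<le> 1"
  shows "dir_quot h x (p - x) t \<le> h p - h x - 1/2 * K * (1 - t) * (norm (x - p))\<^sup>2"
proof -
  have "t *\<^sub>R p + (1 - t) *\<^sub>R x = x + t *\<^sub>R (p - x)" by (simp add: algebra_simps)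
  then have "h (x + t *\<^sub>R (p - x)) - h x \<le> t * (h p - h x - 1/2 * K * (1 - t) * (norm (x - p))\<^sup>2)"
    using strongly_convex_penaltyD[OF h p x, of t] \<open>0 < t\<close> \<open>t \<le> 1\<close>
    by (simp add: algebra_simps norm_minus_commute)
  then show ?thesis using \<open>0 < t\<close> unfolding dir_quot_def by (simp add: divide_le_eq mult.commute)
qed

lemma dir_deriv_strong_bound:
  assumes h: "strongly_convex_penalty K h" and x: "x \<in> unit_simplex" and p: "p \<in> unit_simplex"
  shows "dir_deriv h x (p - x) \<le> ereal (h p - h x - 1/2 * K * (norm (x - p))\<^sup>2)"
proof -
  let ?N = "(norm (x - p))\<^sup>2"
  have convex: "convex_on unit_simplex h" using h by (rule strongly_convex_penalty_imp_convex_on)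
  have quot: "((\<lambda>t. ereal (dir_quot h x (p - x) t)) \<longlongrightarrow> dir_deriv h x (p - x)) (at_right 0)"
    using tendsto_dir_quot_dir_deriv[OF convex x, of "p - x"] p by simp
  have bound: "((\<lambda>t. ereal (h p - h x - 1/2 * K * (1 - t) * ?N))
      \<longlongrightarrow> ereal (h p - h x - 1/2 * K * ?N)) (at_right 0)"
    by (intro tendsto_ereal tendsto_eq_intros) auto
  have "\<forall>\<^sub>F t in at_right 0. ereal (dir_quot h x (p - x) t) \<le> ereal (h p - h x - 1/2 * K * (1 - t) * ?N)"
    unfolding eventually_at_right_field
  proof (intro exI[of _ 1] conjI allI impI)
    fix t :: real assume "0 < t" "t < 1"
    then show "ereal (dir_quot h x (p - x) t) \<le> ereal (h p - h x - 1/2 * K * (1 - t) * ?N)"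
      using dir_quot_strong_bound[OF h x p, of t] by (simp only: ereal_less_eq(3))
  qed simp
  then show ?thesis by (rule tendsto_le[OF trivial_limit_at_right_real bound quot])
qed

section \<open>Directional derivatives towards p at points of Delta_p\<close>

lemma dir_deriv_finite_Delta_p:
  fixes h :: "real^'n::finite \<Rightarrow> real"
  assumes h: "strongly_convex_penalty K h" and p: "p \<in> unit_simplex" and x: "x \<in> Delta_p p"
  shows "\<exists>l. dir_deriv h x (p - x) = ereal l"
proof -
  have xs: "x \<in> unit_simplex" and "supp p \<subseteq> supp x" using x by (auto simp: Delta_p_def)
  then obtain m where "m > 0" "\<forall>i\<in>supp p. m \<le> x $ i"
    using unit_simplex_supp_lower_bound[OF xs] by blast
  then have "x + (- m) *\<^sub>R (p - x) \<in> unit_simplex"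
    by (intro unit_simplex_extend_backward[OF p xs]) auto
  moreover have "x + (p - x) \<in> unit_simplex" using p by simp
  ultimately show ?thesis
    using dir_deriv_finite[OF strongly_convex_penalty_imp_convex_on[OF h] xs, of "p - x" "- m"] \<open>m > 0\<close>
    by simp
qed

lemma Delta_p_line_in_face:
  assumes p: "p \<in> unit_simplex" and x: "x \<in> Delta_p p"
  shows "\<exists>m>0. \<forall>t. \<bar>t\<bar> < m \<longrightarrow> x + t *\<^sub>R (p - x) \<in> face_relint (supp x)"
proof -
  have xs: "x \<in> unit_simplex" and sub: "supp p \<subseteq> supp x" using x by (auto simp: Delta_p_def)
  obtain m where "m > 0" and m: "\<forall>i\<in>supp x. m \<le> x $ i"
    using unit_simplex_supp_lower_bound[OF xs] by blast
  have "x + t *\<^sub>R (p - x) \<in> face_relint (supp x)" if "\<bar>t\<bar> < m" for t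
  proof -
    have inside: "0 < x $ i + t * (p $ i - x $ i)" if "i \<in> supp x" for i
    proof -
      have "\<bar>p $ i - x $ i\<bar> \<le> 1"
        using unit_simplex_nth_bounds[OF xs, of i] unit_simplex_nth_bounds[OF p, of i] by linarith
      then have "\<bar>t\<bar> * \<bar>p $ i - x $ i\<bar> \<le> \<bar>t\<bar>" by (simp add: mult_left_le)
      then have "\<bar>t * (p $ i - x $ i)\<bar> < m" using \<open>\<bar>t\<bar> < m\<close> by (simp add: abs_mult)
      moreover have "m \<le> x $ i" using m that by blast
      ultimately show ?thesis by linarith
    qed
    have outside: "x $ i + t * (p $ i - x $ i) = 0" if "i \<notin> supp x" for i
      using that sub by (auto simp: supp_def)
    have "x + t *\<^sub>R (p - x) \<in> unit_simplex"
      using inside outside by (intro unit_simplex_add_scaleR_diff[OF xs p]) (metis order_le_less order_refl)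
    moreover have "supp (x + t *\<^sub>R (p - x)) = supp x"
      using inside outside by (force simp: supp_def)
    ultimately show ?thesis by (simp add: face_relint_def)
  qed
  with \<open>m > 0\<close> show ?thesis by blast
qed

text \<open>This is the only use of smoothness: for a merely convex h the two one-sided derivatives
  along the segment may differ at x, and then (iii) fails.\<close>

lemma tendsto_dir_quot_two_sided:
  fixes h :: "real^'n::finite \<Rightarrow> real"
  assumes h: "strongly_convex_penalty K h" and p: "p \<in> unit_simplex" and x: "x \<in> Delta_p p"
    and l: "dir_deriv h x (p - x) = ereal l"
  shows "(dir_quot h x (p - x) \<longlongrightarrow> l) (at 0)"
proof -
  have xs: "x \<in> unit_simplex" using x by (simp add: Delta_p_def)
  obtain m where "m > 0" and m: "\<forall>t. \<bar>t\<bar> < m \<longrightarrow> x + t *\<^sub>R (p - x) \<in> face_relint (supp x)"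
    using Delta_p_line_in_face[OF p x] by blast
  have "smooth_on_faces h" using h by (simp add: strongly_convex_penalty_def)
  then obtain U f where U: "face_relint (supp x) \<subseteq> U" "Cinf_on U f"
      and f: "\<forall>z\<in>face_relint (supp x). f z = h z"
    using supp_nonempty[OF xs] unfolding smooth_on_faces_def by blast
  have "x \<in> face_relint (supp x)" using m \<open>m > 0\<close> by (metis abs_zero add.right_neutral scale_zero_left)
  then obtain L where L: "((\<lambda>t. (f (x + t *\<^sub>R (p - x)) - f x) / t) \<longlongrightarrow> L) (at 0)"
    using Cinf_on_directional_limit[OF U(2)] U(1) by blast
  have "\<forall>\<^sub>F t in at 0. (f (x + t *\<^sub>R (p - x)) - f x) / t = dir_quot h x (p - x) t"
    using \<open>m > 0\<close> \<open>x \<in> face_relint (supp x)\<close> m f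
    by (auto simp: eventually_at dir_quot_def intro!: exI[of _ m])
  with L have two_sided: "(dir_quot h x (p - x) \<longlongrightarrow> L) (at 0)" by (rule Lim_transform_eventually)
  have convex: "convex_on unit_simplex h" using h by (rule strongly_convex_penalty_imp_convex_on)
  have "((\<lambda>t. ereal (dir_quot h x (p - x) t)) \<longlongrightarrow> ereal l) (at_right 0)"
    using tendsto_dir_quot_dir_deriv[OF convex xs, of "p - x"] p unfolding l by simp
  moreover have "((\<lambda>t. ereal (dir_quot h x (p - x) t)) \<longlongrightarrow> ereal L) (at_right 0)"
    using two_sided by (intro tendsto_ereal) (simp add: filterlim_at_split)
  ultimately have "L = l" using tendsto_unique[OF trivial_limit_at_right_real] by blast
  with two_sided show ?thesis by simp
qed

lemma tendsto_dir_quot_base_point: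
  fixes h :: "real^'n::finite \<Rightarrow> real"
  assumes "continuous_on S h" "(X \<longlongrightarrow> x) F" "x \<in> S" "\<forall>\<^sub>F j in F. X j \<in> S"
    and "x + t *\<^sub>R (p - x) \<in> S" "\<forall>\<^sub>F j in F. X j + t *\<^sub>R (p - X j) \<in> S"
  shows "((\<lambda>j. dir_quot h (X j) (p - X j) t) \<longlongrightarrow> dir_quot h x (p - x) t) F"
  unfolding dir_quot_def divide_inverse
  by (intro tendsto_mult_right tendsto_diff continuous_on_tendsto_compose[OF assms(1)] tendsto_intros assms)

lemma eventually_nth_lower_bound:
  fixes X :: "'a \<Rightarrow> real^'n::finite"
  assumes "(X \<longlongrightarrow> x) F" "\<forall>i\<in>A. m \<le> x $ i" "s < m"
  shows "\<forall>\<^sub>F j in F. \<forall>i\<in>A. s \<le> X j $ i"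
proof -
  have "\<forall>\<^sub>F j in F. s < X j $ i" if "i \<in> A" for i
    using assms that by (intro order_tendstoD(1)[OF tendsto_vec_nth[OF assms(1)]]) auto
  then have "\<forall>\<^sub>F j in F. \<forall>i\<in>A. s < X j $ i" by (intro eventually_ball_finite) auto
  then show ?thesis by eventually_elim auto
qed

lemma tendsto_squeeze_two_sided:
  fixes u :: "'a \<Rightarrow> real" and a :: "'a \<Rightarrow> real \<Rightarrow> real"
  assumes q: "(q \<longlongrightarrow> L) (at 0)" and "\<delta>\<^sub>0 > 0"
    and a: "\<And>\<delta>. \<delta> \<noteq> 0 \<Longrightarrow> \<bar>\<delta>\<bar> \<le> \<delta>\<^sub>0 \<Longrightarrow> ((\<lambda>j. a j \<delta>) \<longlongrightarrow> q \<delta>) F"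
    and between: "\<And>\<delta>. 0 < \<delta> \<Longrightarrow> \<delta> \<le> \<delta>\<^sub>0 \<Longrightarrow> \<forall>\<^sub>F j in F. a j (- \<delta>) \<le> u j \<and> u j \<le> a j \<delta>"
  shows "(u \<longlongrightarrow> L) F"
proof (rule tendstoI)
  fix e :: real assume "e > 0"
  then obtain r where "r > 0" and r: "\<And>t. t \<noteq> 0 \<Longrightarrow> \<bar>t\<bar> < r \<Longrightarrow> \<bar>q t - L\<bar> < e / 2"
    using tendstoD[OF q, of "e / 2"] by (auto simp: eventually_at dist_real_def)
  define \<delta> where "\<delta> = min (r / 2) \<delta>\<^sub>0"
  have "0 < \<delta>" "\<delta> < r" "\<delta> \<le> \<delta>\<^sub>0" using \<open>r > 0\<close> \<open>\<delta>\<^sub>0 > 0\<close> by (auto simp: \<delta>_def)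
  have "\<bar>q \<delta> - L\<bar> < e / 2" "\<bar>q (- \<delta>) - L\<bar> < e / 2"
    using r \<open>0 < \<delta>\<close> \<open>\<delta> < r\<close> by auto
  then have "q \<delta> < L + e" "L - e < q (- \<delta>)" by (simp_all only: abs_less_iff) linarith+
  moreover note a[of \<delta>] a[of "- \<delta>"]
  ultimately have "\<forall>\<^sub>F j in F. a j \<delta> < L + e" "\<forall>\<^sub>F j in F. L - e < a j (- \<delta>)"
    using \<open>0 < \<delta>\<close> \<open>\<delta> \<le> \<delta>\<^sub>0\<close> by (auto intro: order_tendstoD)
  with between[OF \<open>0 < \<delta>\<close> \<open>\<delta> \<le> \<delta>\<^sub>0\<close>] show "\<forall>\<^sub>F j in F. dist (u j) L < e"
    by eventually_elim (auto simp: dist_real_def abs_less_iff)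
qed

lemma Delta_p_eventually_line_in_simplex:
  assumes p: "p \<in> unit_simplex" and X: "\<forall>j. X j \<in> unit_simplex" and x: "x \<in> Delta_p p"
    and "X \<longlonglongrightarrow> x"
  shows "\<exists>\<delta>\<^sub>0>0. \<forall>\<delta>. \<bar>\<delta>\<bar> \<le> \<delta>\<^sub>0 \<longrightarrow> (\<forall>\<^sub>F j in sequentially. X j + \<delta> *\<^sub>R (p - X j) \<in> unit_simplex)"
proof -
  have xs: "x \<in> unit_simplex" and "supp p \<subseteq> supp x" using x by (auto simp: Delta_p_def)
  then obtain m where "m > 0" "\<forall>i\<in>supp p. m \<le> x $ i"
    using unit_simplex_supp_lower_bound[OF xs] by blast
  then have margin: "\<forall>\<^sub>F j in sequentially. \<forall>i\<in>supp p. m / 2 \<le> X j $ i"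
    by (intro eventually_nth_lower_bound[OF \<open>X \<longlonglongrightarrow> x\<close>]) auto
  have "\<forall>\<^sub>F j in sequentially. X j + \<delta> *\<^sub>R (p - X j) \<in> unit_simplex"
    if "\<bar>\<delta>\<bar> \<le> min (m / 2) 1" for \<delta>
  proof (cases "0 \<le> \<delta>")
    case True
    then show ?thesis
      using that X p by (intro always_eventually allI convex_add_scaleR_mem[OF convex_unit_simplex]) auto
  next
    case False
    from margin show ?thesis
      by eventually_elim (use unit_simplex_extend_backward[OF p, of _ "- \<delta>" "m / 2"] that X False in auto)
  qed
  with \<open>m > 0\<close> show ?thesis by (intro exI[of _ "min (m / 2) 1"]) auto
qed

lemma tendsto_dir_deriv_Delta_p:
  fixes h :: "real^'n::finite \<Rightarrow> real"
  assumes h: "strongly_convex_penalty K h" and p: "p \<in> unit_simplex"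
    and X: "\<forall>j. X j \<in> Delta_p p" and x: "x \<in> Delta_p p" and lim: "X \<longlonglongrightarrow> x"
  shows "(\<lambda>j. real_of_ereal (dir_deriv h (X j) (p - X j))) \<longlonglongrightarrow> real_of_ereal (dir_deriv h x (p - x))"
proof -
  define D where "D y = real_of_ereal (dir_deriv h y (p - y))" for y
  have D: "dir_deriv h y (p - y) = ereal (D y)" if "y \<in> Delta_p p" for y
    using dir_deriv_finite_Delta_p[OF h p that] by (auto simp: D_def)
  have xs: "x \<in> unit_simplex" and Xs: "\<And>j. X j \<in> unit_simplex" using x X by (auto simp: Delta_p_def)
  have convex: "convex_on unit_simplex h" using h by (rule strongly_convex_penalty_imp_convex_on)
  have hc: "continuous_on unit_simplex h" using h by (simp add: strongly_convex_penalty_def)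
  obtain \<delta>\<^sub>1 where "\<delta>\<^sub>1 > 0" and line_X: "\<And>\<delta>. \<bar>\<delta>\<bar> \<le> \<delta>\<^sub>1 \<Longrightarrow>
      \<forall>\<^sub>F j in sequentially. X j + \<delta> *\<^sub>R (p - X j) \<in> unit_simplex"
    using Delta_p_eventually_line_in_simplex[OF p _ x lim] Xs by blast
  obtain m where "m > 0" and line_x: "\<And>t. \<bar>t\<bar> < m \<Longrightarrow> x + t *\<^sub>R (p - x) \<in> unit_simplex"
    using Delta_p_line_in_face[OF p x] by (auto simp: face_relint_def)
  define \<delta>\<^sub>0 where "\<delta>\<^sub>0 = Min {\<delta>\<^sub>1, m / 2, 1}"
  have "\<delta>\<^sub>0 > 0" "\<delta>\<^sub>0 \<le> \<delta>\<^sub>1" "\<delta>\<^sub>0 < m" "\<delta>\<^sub>0 \<le> 1" using \<open>\<delta>\<^sub>1 > 0\<close> \<open>m > 0\<close> by (auto simp: \<delta>\<^sub>0_def)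
  show ?thesis unfolding D_def[symmetric]
  proof (rule tendsto_squeeze_two_sided)
    show "(dir_quot h x (p - x) \<longlongrightarrow> D x) (at 0)"
      by (rule tendsto_dir_quot_two_sided[OF h p x D[OF x]])
    show "(\<lambda>j. dir_quot h (X j) (p - X j) \<delta>) \<longlonglongrightarrow> dir_quot h x (p - x) \<delta>" if "\<bar>\<delta>\<bar> \<le> \<delta>\<^sub>0" for \<delta>
      using that \<open>\<delta>\<^sub>0 \<le> \<delta>\<^sub>1\<close> \<open>\<delta>\<^sub>0 < m\<close> Xs
      by (intro tendsto_dir_quot_base_point[OF hc lim xs] line_x line_X always_eventually allI) auto
    show "\<forall>\<^sub>F j in sequentially. dir_quot h (X j) (p - X j) (- \<delta>) \<le> D (X j) \<and>
        D (X j) \<le> dir_quot h (X j) (p - X j) \<delta>" if "0 < \<delta>" "\<delta> \<le> \<delta>\<^sub>0" for \<delta>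
    proof -
      have "\<bar>- \<delta>\<bar> \<le> \<delta>\<^sub>1" using that \<open>\<delta>\<^sub>0 \<le> \<delta>\<^sub>1\<close> by simp
      from line_X[OF this] show ?thesis
      proof eventually_elim
        case (elim j)
        have "ereal (dir_quot h (X j) (p - X j) (- \<delta>)) \<le> dir_deriv h (X j) (p - X j)"
          by (rule dir_quot_le_dir_deriv[OF convex Xs]) (use elim p \<open>0 < \<delta>\<close> in auto)
        moreover have "dir_deriv h (X j) (p - X j) \<le> ereal (dir_quot h (X j) (p - X j) \<delta>)"
          by (rule dir_deriv_le_dir_quot[OF convex Xs]) (use p that \<open>\<delta>\<^sub>0 \<le> 1\<close> in auto)
        ultimately show ?case using D X by simp
      qed
    qed
  qed fact
qed

section \<open>The Bregman divergence\<close>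

lemma dir_deriv_zero: "dir_deriv f x 0 = 0"
  unfolding dir_deriv_def zero_ereal_def by (rule tendsto_Lim) (simp_all add: trivial_limit_at_right_real)

lemma bregman_self: "bregman h p p = 0"
  by (simp add: bregman_def dir_deriv_zero)

lemma bregman_lower_bound:
  fixes h :: "real^'n::finite \<Rightarrow> real"
  assumes "strongly_convex_penalty K h" "x \<in> unit_simplex" "p \<in> unit_simplex"
  shows "ereal (1/2 * K * (norm (x - p))\<^sup>2) \<le> bregman h p x"
  using dir_deriv_strong_bound[OF assms] unfolding bregman_def
  by (cases "dir_deriv h x (p - x)") auto

lemma bregman_eq_0_iff:
  fixes h :: "real^'n::finite \<Rightarrow> real"
  assumes h: "strongly_convex_penalty K h" and "x \<in> unit_simplex" "p \<in> unit_simplex"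
  shows "bregman h p x = 0 \<longleftrightarrow> p = x"
proof
  assume "bregman h p x = 0"
  then have "1/2 * K * (norm (x - p))\<^sup>2 \<le> 0"
    using bregman_lower_bound[OF assms] by (simp add: zero_ereal_def)
  moreover have "K > 0" using h by (simp add: strongly_convex_penalty_def)
  ultimately show "p = x" by (simp add: mult_le_0_iff)
qed (simp add: bregman_self)

lemma bregman_Delta_p:
  fixes h :: "real^'n::finite \<Rightarrow> real"
  assumes "strongly_convex_penalty K h" "p \<in> unit_simplex" "x \<in> Delta_p p"
  shows "bregman h p x = ereal (h p - h x - real_of_ereal (dir_deriv h x (p - x)))"
  using dir_deriv_finite_Delta_p[OF assms] by (auto simp: bregman_def)

lemma tendsto_bregman_Delta_p:
  fixes h :: "real^'n::finite \<Rightarrow> real"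
  assumes h: "strongly_convex_penalty K h" and p: "p \<in> unit_simplex"
    and X: "\<forall>j. X j \<in> Delta_p p" and x: "x \<in> Delta_p p" and lim: "X \<longlonglongrightarrow> x"
  shows "(\<lambda>j. bregman h p (X j)) \<longlonglongrightarrow> bregman h p x"
proof -
  have "continuous_on unit_simplex h" using h by (simp add: strongly_convex_penalty_def)
  then have "(\<lambda>j. h (X j)) \<longlonglongrightarrow> h x"
    using x X by (intro continuous_on_tendsto_compose[OF _ lim]) (auto simp: Delta_p_def)
  then have "(\<lambda>j. ereal (h p - h (X j) - real_of_ereal (dir_deriv h (X j) (p - X j))))
      \<longlonglongrightarrow> ereal (h p - h x - real_of_ereal (dir_deriv h x (p - x)))"
    by (intro tendsto_ereal tendsto_diff tendsto_const tendsto_dir_deriv_Delta_p[OF h p X x lim])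
  then show ?thesis using bregman_Delta_p[OF h p] X x by simp
qed

theorem propositionC2:
  fixes h :: "real^'n::finite \<Rightarrow> real" and K :: real and p :: "real^'n"
  assumes "strongly_convex_penalty K h"
    and "p \<in> unit_simplex"
  shows "(\<forall>x\<in>Delta_p p. bregman h p x < \<infinity>)
    \<and> (\<forall>x\<in>unit_simplex. 0 \<le> bregman h p x \<and> (bregman h p x = 0 \<longleftrightarrow> p = x))
    \<and> (\<forall>x\<in>unit_simplex. ereal (1/2 * K * (norm (x - p))\<^sup>2) \<le> bregman h p x)
    \<and> (\<forall>X x. (\<forall>j. X j \<in> Delta_p p) \<longrightarrow> x \<in> Delta_p p \<longrightarrow> X \<longlonglongrightarrow> x
          \<longrightarrow> (\<lambda>j. bregman h p (X j)) \<longlonglongrightarrow> bregman h p x)"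
proof (intro conjI ballI allI impI)
  note h = assms(1) and p = assms(2)
  show "bregman h p x < \<infinity>" if "x \<in> Delta_p p" for x
    using bregman_Delta_p[OF h p that] by simp
  show lower: "ereal (1/2 * K * (norm (x - p))\<^sup>2) \<le> bregman h p x" if "x \<in> unit_simplex" for x
    by (rule bregman_lower_bound[OF h that p])
  show "0 \<le> bregman h p x" if "x \<in> unit_simplex" for x
    using h lower[OF that] by (force simp: strongly_convex_penalty_def intro: order_trans[rotated])
  show "bregman h p x = 0 \<longleftrightarrow> p = x" if "x \<in> unit_simplex" for x
    by (rule bregman_eq_0_iff[OF h that p])
  show "(\<lambda>j. bregman h p (X j)) \<longlonglongrightarrow> bregman h p x"
    if "\<forall>j. X j \<in> Delta_p p" "x \<in> Delta_p p" "X \<longlonglongrightarrow> x" for X x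
    by (rule tendsto_bregman_Delta_p[OF h p that])
qed

end
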